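(* Let $\rho_2>0$. Let $\{P_t(n)\}_{t\ge0}$, $n\in\mathbb N$, be independent Poisson processes of rate $2\rho_2$; for each $t\ge0$ define $\xi_t(0)=1$, $\xi_t(n+1)=\xi_t(n)+(P_t(n+1)-1)\mathbf 1_{\{n<M_t\}}$, where $M_t=\inf\{n\ge0:\xi_t(n)=0\}\in\mathbb N\cup\{\infty\}$. Let $g_2(s)=\inf\{x\in(0,1): -\log(1-x)/(2\rho_2x)>s\}$ for $s\ge0$. Then $\mathbb P(M_t=\infty)=g_2(t)$ for every $t\ge0$, and $\chi=\inf\{t\ge0: M_t=\infty\}$ is a continuous random variable with distribution function $g_2$. *)

theory Defs
  imports "HOL-Probability.Probability"
begin

definition poisson_process :: "'a measure \<Rightarrow> real \<Rightarrow> (real \<Rightarrow> 'a \<Rightarrow> nat) \<Rightarrow> bool" where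
  "poisson_process M lam N \<longleftrightarrow>
     (\<forall>t. N t \<in> measurable M (count_space UNIV)) \<and>
     (\<forall>\<omega>\<in>space M. N 0 \<omega> = 0 \<and> mono_on {0..} (\<lambda>t. N t \<omega>) \<and>
        (\<forall>t\<ge>0. continuous (at_right t) (\<lambda>s. real (N s \<omega>)))) \<and>
     (\<forall>s t. 0 \<le> s \<longrightarrow> s < t \<longrightarrow>
        distr M (count_space UNIV) (\<lambda>\<omega>. N t \<omega> - N s \<omega>) = measure_pmf (poisson_pmf (lam * (t - s)))) \<and>
     (\<forall>(ts :: nat \<Rightarrow> real) k. 0 \<le> ts 0 \<longrightarrow> (\<forall>i<k. ts i < ts (Suc i)) \<longrightarrow>
        prob_space.indep_vars M (\<lambda>_. count_space UNIV)
          (\<lambda>i \<omega>. N (ts (Suc i)) \<omega> - N (ts i) \<omega>) {..<k})"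

text \<open>The walk xi with steps p(n+1) - 1, started at 1, stopped at its first zero.
  (Guard "xi n \<noteq> 0" coincides with "n < M" since the walk stays at 0 once it hits 0.)\<close>
fun xi :: "(nat \<Rightarrow> nat) \<Rightarrow> nat \<Rightarrow> int" where
  "xi p 0 = 1"
| "xi p (Suc n) = xi p n + (if xi p n \<noteq> 0 then int (p (Suc n)) - 1 else 0)"

definition hitM :: "(nat \<Rightarrow> nat) \<Rightarrow> enat" where
  "hitM p = Inf (enat ` {n. xi p n = 0})"

definition g2 :: "real \<Rightarrow> real \<Rightarrow> real" where
  "g2 rho s = Inf {x \<in> {0<..<1}. - ln (1 - x) / (2 * rho * x) > s}"

end

theory Submission
  imports Defs
begin

(* Read generation by generation, the walk xi is the exploration of a Galton--Watson tree whose
   offspring numbers are P_t(1), P_t(2), ...: the k individuals of a generation use up the next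
   k offspring numbers, and xi never hits 0 iff the population never dies out. At time t these
   numbers are i.i.d. Poisson(2 rho t), so the probability of extinction within n generations is
   f^n(0) for the generating function f(s) = exp(2 rho t (s - 1)), and the extinction probability
   is the least fixed point L of f in [0,1]. Since f is strictly convex with fixed points L and 1,
   the condition -log(1 - x) / (2 rho x) > t, which says f(1 - x) > 1 - x, holds iff 1 - x < L;
   hence g2(t) = 1 - L is the survival probability.
   Survival is monotone in t because the Poisson paths are nondecreasing, so {chi <= t} is the
   decreasing intersection of the survival events at times t + 1/k. As g2 is the generalised
   inverse of a strictly increasing function, it is continuous and tends to 1, which gives the
   distribution function of chi, its almost sure finiteness and the absence of atoms. *)

section \<open>The exploration walk and its generations\<close>

fun stopped_walk :: "nat \<Rightarrow> nat stream \<Rightarrow> nat \<Rightarrow> nat" where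
  "stopped_walk k X 0 = k"
| "stopped_walk k X (Suc n) =
     (if stopped_walk k X n = 0 then 0 else stopped_walk k X n + X !! n - 1)"

fun extinct_within :: "nat \<Rightarrow> nat \<Rightarrow> nat stream \<Rightarrow> bool" where
  "extinct_within 0 k X \<longleftrightarrow> k = 0"
| "extinct_within (Suc n) k X \<longleftrightarrow> extinct_within n (sum_list (stake k X)) (sdrop k X)"

lemma stopped_walk_shift:
  "stopped_walk k X (i + m) = stopped_walk (stopped_walk k X i) (sdrop i X) m"
  by (induction m) (auto simp: sdrop_snth)

lemma stopped_walk_initial:
  assumes "0 < k" "i \<le> k"
  shows "stopped_walk k X i = k - i + sum_list (stake i X)"
  using assms by (induction i) (auto simp del: stake.simps(2) simp: stake_Suc)

lemma stopped_walk_after_first_generation: "stopped_walk k X k = sum_list (stake k X)"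
  by (cases "k = 0") (simp_all add: stopped_walk_initial)

lemma extinct_within_of_stopped_walk_eq_0:
  "stopped_walk k X m = 0 \<Longrightarrow> \<exists>n. extinct_within n k X"
proof (induction m arbitrary: k X rule: less_induct)
  case (less m)
  show ?case
  proof (cases "k = 0")
    case True
    then show ?thesis by (metis extinct_within.simps(1))
  next
    case False
    have "k \<le> m"
      using less.prems stopped_walk_initial[of k m X] False by (cases "m < k") auto
    then have "stopped_walk (sum_list (stake k X)) (sdrop k X) (m - k) = 0"
      using less.prems stopped_walk_shift[of k X k "m - k"]
      by (simp add: stopped_walk_after_first_generation)
    with less.IH[of "m - k"] obtain n where "extinct_within n (sum_list (stake k X)) (sdrop k X)"
      using False \<open>k \<le> m\<close> by auto
    then show ?thesis by (metis extinct_within.simps(2))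
  qed
qed

lemma stopped_walk_eq_0_of_extinct_within:
  "extinct_within n k X \<Longrightarrow> \<exists>m. stopped_walk k X m = 0"
proof (induction n arbitrary: k X)
  case 0
  then show ?case by (metis extinct_within.simps(1) stopped_walk.simps(1))
next
  case (Suc n)
  then obtain m where "stopped_walk (sum_list (stake k X)) (sdrop k X) m = 0" by auto
  then have "stopped_walk k X (k + m) = 0"
    by (simp add: stopped_walk_shift stopped_walk_after_first_generation)
  then show ?case ..
qed

lemma stopped_walk_hits_zero_iff_extinct:
  "(\<exists>m. stopped_walk k X m = 0) \<longleftrightarrow> (\<exists>n. extinct_within n k X)"
  using extinct_within_of_stopped_walk_eq_0 stopped_walk_eq_0_of_extinct_within by blast

lemma extinct_within_Suc: "extinct_within n k X \<Longrightarrow> extinct_within (Suc n) k X"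
proof (induction n arbitrary: k X)
  case (Suc n)
  then show ?case by (simp only: extinct_within.simps(2))
qed simp

lemma extinct_within_mono:
  assumes "m \<le> n" "extinct_within m k X"
  shows "extinct_within n k X"
  using assms(1) by (induction rule: dec_induct) (use assms(2) extinct_within_Suc in blast)+

lemma measurable_extinct_within[measurable]:
  "Measurable.pred (stream_space (count_space UNIV)) (extinct_within n k)"
proof (induction n arbitrary: k)
  case (Suc n)
  have "(\<lambda>X. extinct_within n (sum_list (stake k X)) (sdrop k X)) \<in>
      measurable (stream_space (count_space UNIV)) (count_space UNIV)"
    by (rule measurable_compose_countable[where f = "\<lambda>i X. extinct_within n i (sdrop k X)"])
      (use Suc in auto)
  then show ?case by simp
next
  case 0
  show ?case by simp
qed

lemma measurable_extinct_within_pmf[measurable]: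
  "Measurable.pred (stream_space (measure_pmf p)) (extinct_within n k)"
  by (subst measurable_cong_sets[OF sets_stream_space_cong[OF sets_measure_pmf_count_space] refl])
    (rule measurable_extinct_within)

lemma xi_eq_stopped_walk: "xi p n = int (stopped_walk 1 (to_stream (\<lambda>j. p (Suc j))) n)"
  by (induction n) (auto simp: to_stream_def of_nat_diff)

lemma hitM_eq_infinity_iff: "hitM p = \<infinity> \<longleftrightarrow> (\<forall>n. xi p n \<noteq> 0)"
  by (auto simp: hitM_def Inf_top_conv simp flip: top_enat_def) (simp add: top_enat_def)

lemma hitM_eq_infinity_iff_not_extinct:
  "hitM p = \<infinity> \<longleftrightarrow> \<not> (\<exists>n. extinct_within n 1 (to_stream (\<lambda>j. p (Suc j))))"
  by (simp add: hitM_eq_infinity_iff xi_eq_stopped_walk flip: stopped_walk_hits_zero_iff_extinct)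

lemma xi_nonneg: "0 \<le> xi p n"
  by (induction n) auto

lemma hitM_eq_infinity_mono:
  assumes le: "\<And>n. p n \<le> p' n" and surv: "hitM p = \<infinity>"
  shows "hitM p' = \<infinity>"
proof -
  have pos: "1 \<le> xi p n" for n
  proof -
    have "xi p n \<noteq> 0" using surv by (simp add: hitM_eq_infinity_iff)
    with xi_nonneg[of p n] show ?thesis by linarith
  qed
  have le_xi: "xi p n \<le> xi p' n" for n
  proof (induction n)
    case (Suc n)
    then show ?case using pos[of n] le[of "Suc n"] by auto
  qed simp
  have "xi p' n \<noteq> 0" for n
    using pos[of n] le_xi[of n] by linarith
  then show ?thesis by (simp add: hitM_eq_infinity_iff)
qed

section \<open>Galton--Watson extinction probabilities\<close>

definition pgf :: "nat pmf \<Rightarrow> real \<Rightarrow> real" where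
  "pgf p s = measure_pmf.expectation p (\<lambda>k. s ^ k)"

lemma nn_integral_power_eq_pgf:
  assumes "0 \<le> s" "s \<le> 1"
  shows "(\<integral>\<^sup>+k. ennreal (s ^ k) \<partial>measure_pmf p) = ennreal (pgf p s)"
  unfolding pgf_def using assms
  by (intro nn_integral_eq_integral measure_pmf.integrable_const_bound[where B = 1])
    (auto simp: power_le_one)

lemma pgf_nonneg: "0 \<le> s \<Longrightarrow> 0 \<le> pgf p s"
  unfolding pgf_def by (intro integral_nonneg_AE) auto

lemma pgf_le_one: "0 \<le> s \<Longrightarrow> s \<le> 1 \<Longrightarrow> pgf p s \<le> 1"
  unfolding pgf_def
  by (intro measure_pmf.integral_le_const measure_pmf.integrable_const_bound[where B = 1])
    (auto simp: power_le_one)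

lemma pgf_iterate_bounds: "0 \<le> (pgf p ^^ n) 0 \<and> (pgf p ^^ n) 0 \<le> 1"
  by (induction n) (auto simp: pgf_nonneg pgf_le_one)

lemma emeasure_extinct_within_after_stake:
  fixes p :: "nat pmf"
  defines "S \<equiv> stream_space (measure_pmf p)"
  assumes s: "0 \<le> s" "s \<le> 1"
    and extinct: "\<And>z. emeasure S {X \<in> space S. extinct_within n z X} = ennreal (s ^ z)"
  shows "emeasure S {X \<in> space S. extinct_within n (c + sum_list (stake k X)) (sdrop k X)}
    = ennreal (s ^ c * pgf p s ^ k)"
proof (induction k arbitrary: c)
  case 0
  then show ?case using extinct[of c] by simp
next
  case (Suc k)
  let ?E = "{X \<in> space S. extinct_within n (c + sum_list (stake (Suc k) X)) (sdrop (Suc k) X)}"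
  have "emeasure S ?E = (\<integral>\<^sup>+t. emeasure S {X \<in> space S. t ## X \<in> ?E} \<partial>measure_pmf p)"
    unfolding S_def by (rule prob_space.emeasure_stream_space[OF prob_space_measure_pmf]) measurable
  also have "\<dots> = (\<integral>\<^sup>+t. emeasure S
      {X \<in> space S. extinct_within n ((c + t) + sum_list (stake k X)) (sdrop k X)} \<partial>measure_pmf p)"
    by (auto simp: S_def space_stream_space add.assoc
        intro!: nn_integral_cong arg_cong2[where f = emeasure])
  also have "\<dots> = (\<integral>\<^sup>+t. ennreal (s ^ c * pgf p s ^ k) * ennreal (s ^ t) \<partial>measure_pmf p)"
    using s by (simp add: Suc.IH power_add pgf_nonneg ennreal_mult' mult_ac)
  also have "\<dots> = ennreal (s ^ c * pgf p s ^ k) * ennreal (pgf p s)"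
    using s by (simp add: nn_integral_cmult nn_integral_power_eq_pgf)
  also have "\<dots> = ennreal (s ^ c * pgf p s ^ Suc k)"
    using s by (simp add: pgf_nonneg ennreal_mult'[symmetric] mult_ac)
  finally show ?case .
qed

lemma emeasure_extinct_within:
  "emeasure (stream_space (measure_pmf p))
      {X \<in> space (stream_space (measure_pmf p)). extinct_within n k X}
    = ennreal (((pgf p ^^ n) 0) ^ k)"
proof (induction n arbitrary: k)
  case 0
  interpret prob_space "stream_space (measure_pmf p)"
    by (rule prob_space.prob_space_stream_space[OF prob_space_measure_pmf])
  show ?case by (cases "k = 0") (simp_all add: emeasure_space_1)
next
  case (Suc n)
  show ?case
    using emeasure_extinct_within_after_stake[where s = "(pgf p ^^ n) 0" and c = 0]
      Suc.IH pgf_iterate_bounds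
    by simp
qed

lemma pgf_iterates_tendsto_extinction_probability:
  "(\<lambda>n. (pgf p ^^ n) 0) \<longlonglongrightarrow> measure (stream_space (measure_pmf p))
     {X \<in> space (stream_space (measure_pmf p)). \<exists>n. extinct_within n 1 X}"
proof -
  let ?S = "stream_space (measure_pmf p)"
  interpret S: prob_space ?S
    by (rule prob_space.prob_space_stream_space[OF prob_space_measure_pmf])
  define E where "E n = {X \<in> space ?S. extinct_within n 1 X}" for n
  have "(\<lambda>n. S.prob (E n)) \<longlonglongrightarrow> S.prob (\<Union>n. E n)"
    by (intro S.finite_Lim_measure_incseq) (auto simp: E_def incseq_def intro: extinct_within_mono)
  moreover have "S.prob (E n) = (pgf p ^^ n) 0" for n
    using emeasure_extinct_within[where p = p and n = n and k = 1]
      pgf_iterate_bounds[where p = p and n = n]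
    by (simp add: E_def S.emeasure_eq_measure)
  moreover have "(\<Union>n. E n) = {X \<in> space ?S. \<exists>n. extinct_within n 1 X}"
    by (auto simp: E_def)
  ultimately show ?thesis by simp
qed

lemma limit_of_iterates_least_fixpoint:
  fixes f :: "real \<Rightarrow> real"
  assumes "a \<le> b" and mono: "mono_on {a..b} f" and maps: "f ` {a..b} \<subseteq> {a..b}"
    and cont: "continuous_on {a..b} f" and lim: "(\<lambda>n. (f ^^ n) a) \<longlonglongrightarrow> L"
  shows "L \<in> {a..b}" "f L = L" "\<And>s. s \<in> {a..b} \<Longrightarrow> f s \<le> s \<Longrightarrow> L \<le> s"
proof -
  have iter: "(f ^^ n) a \<in> {a..b}" for n
    using assms(1) maps by (induction n) (auto simp: image_subset_iff)
  show L: "L \<in> {a..b}"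
    using iter by (intro closed_sequentially[OF closed_atLeastAtMost _ lim]) auto
  have "(\<lambda>n. f ((f ^^ n) a)) \<longlonglongrightarrow> f L"
    using iter L by (intro continuous_on_tendsto_compose[OF cont lim]) auto
  moreover have "(\<lambda>n. f ((f ^^ n) a)) \<longlonglongrightarrow> L"
    using LIMSEQ_Suc[OF lim] by simp
  ultimately show "f L = L" by (rule LIMSEQ_unique)
  fix s assume s: "s \<in> {a..b}" "f s \<le> s"
  have "(f ^^ n) a \<le> s" for n
  proof (induction n)
    case (Suc n)
    have "f ((f ^^ n) a) \<le> f s"
      using mono_onD[OF mono iter[of n] s(1) Suc] .
    then show ?case using s by simp
  qed (use s in simp)
  then show "L \<le> s" by (intro LIMSEQ_le_const2[OF lim]) auto
qed

section \<open>Poisson offspring\<close>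

lemma exp_strictly_below_chord:
  fixes a b c :: real
  assumes "a < b" "b < c"
  shows "exp b * (c - a) < (c - b) * exp a + (b - a) * exp c"
proof -
  have "exp b * (1 + (x - b)) < exp x" if "x \<noteq> b" for x
    using exp_minus_greater[of "b - x"] that
    by (simp add: mult_strict_left_mono exp_diff field_simps)
  from this[of a] this[of c] assms
  have "(c - b) * (exp b * (1 + (a - b))) + (b - a) * (exp b * (1 + (c - b)))
      < (c - b) * exp a + (b - a) * exp c"
    by (intro add_strict_mono mult_strict_left_mono) auto
  then show ?thesis by (simp add: algebra_simps)
qed

lemma nn_integral_power_poisson:
  assumes "0 < lam" "0 \<le> s"
  shows "(\<integral>\<^sup>+k. ennreal (s ^ k) \<partial>measure_pmf (poisson_pmf lam)) = ennreal (exp (lam * (s - 1)))"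
proof -
  have "(\<lambda>k. (lam * s) ^ k / fact k) sums exp (lam * s)"
    using exp_converges[of "lam * s"] by (simp add: divide_inverse_commute)
  then have "(\<lambda>k. exp (- lam) * ((lam * s) ^ k / fact k)) sums (exp (- lam) * exp (lam * s))"
    by (rule sums_mult)
  then have sums: "(\<lambda>k. lam ^ k / fact k * exp (- lam) * s ^ k) sums exp (lam * (s - 1))"
    by (simp add: power_mult_distrib algebra_simps flip: exp_add)
  have "(\<integral>\<^sup>+k. ennreal (s ^ k) \<partial>measure_pmf (poisson_pmf lam))
      = (\<Sum>k. ennreal (lam ^ k / fact k * exp (- lam) * s ^ k))"
    using assms
    by (simp add: nn_integral_measure_pmf nn_integral_count_space_nat flip: ennreal_mult)
  also have "\<dots> = ennreal (exp (lam * (s - 1)))"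
    using assms sums by (intro suminf_ennreal_eq) auto
  finally show ?thesis .
qed

lemma pgf_poisson:
  assumes "0 < lam" "0 \<le> s" "s \<le> 1"
  shows "pgf (poisson_pmf lam) s = exp (lam * (s - 1))"
  using nn_integral_power_poisson[OF assms(1,2)] nn_integral_power_eq_pgf[OF assms(2,3)]
    pgf_nonneg[OF assms(2)]
  by simp

lemma poisson_pgf_below_diagonal:
  fixes lam L s :: real
  assumes "0 < lam" "exp (lam * (L - 1)) = L" "L < s" "s < 1"
  shows "exp (lam * (s - 1)) < s"
proof -
  \<comment> \<open>Strict convexity: between the fixed points \<open>L\<close> and \<open>1\<close> the graph lies below the chord,
    which is the diagonal.\<close>
  have "exp (lam * (s - 1)) * (0 - lam * (L - 1))
      < (0 - lam * (s - 1)) * exp (lam * (L - 1)) + (lam * (s - 1) - lam * (L - 1)) * exp 0"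
    using assms
    by (intro exp_strictly_below_chord) (auto simp: mult_less_cancel_left_pos intro: mult_pos_neg)
  then have "exp (lam * (s - 1)) * (lam * (1 - L)) < s * (lam * (1 - L))"
    using assms(2) by (simp add: algebra_simps)
  then show ?thesis
    using assms by (simp add: mult_less_cancel_right_pos)
qed

section \<open>The function g2 as a generalised inverse\<close>

definition gen_inverse :: "(real \<Rightarrow> real) \<Rightarrow> real \<Rightarrow> real" where
  "gen_inverse \<phi> t = Inf {x \<in> {0<..<1}. t < \<phi> x}"

lemma gen_inverse_le: "x \<in> {0<..<1} \<Longrightarrow> t < \<phi> x \<Longrightarrow> gen_inverse \<phi> t \<le> x"
  unfolding gen_inverse_def by (rule cInf_lower) (auto intro: bdd_belowI[of _ 0])

lemma gen_inverse_eq_0: "(\<And>x. x \<in> {0<..<1} \<Longrightarrow> t < \<phi> x) \<Longrightarrow> gen_inverse \<phi> t = 0"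
proof -
  assume "\<And>x. x \<in> {0<..<1} \<Longrightarrow> t < \<phi> x"
  then have "{x \<in> {0<..<1}. t < \<phi> x} = {0<..<1}" by blast
  then show ?thesis by (simp add: gen_inverse_def)
qed

context
  fixes \<phi> :: "real \<Rightarrow> real"
  assumes strict_mono: "strict_mono_on {0<..<1} \<phi>"
    and unbounded: "\<And>t. \<exists>x\<in>{0<..<1}. t < \<phi> x"
begin

lemma gen_inverse_greatest:
  "(\<And>x. x \<in> {0<..<1} \<Longrightarrow> t < \<phi> x \<Longrightarrow> c \<le> x) \<Longrightarrow> c \<le> gen_inverse \<phi> t"
  unfolding gen_inverse_def using unbounded[of t] by (intro cInf_greatest) auto

lemma gen_inverse_nonneg: "0 \<le> gen_inverse \<phi> t"
  by (rule gen_inverse_greatest) simp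

lemma gen_inverse_le_one: "gen_inverse \<phi> t \<le> 1"
proof -
  obtain x where "x \<in> {0<..<1}" "t < \<phi> x" using unbounded[of t] ..
  then have "gen_inverse \<phi> t \<le> x" by (rule gen_inverse_le)
  with \<open>x \<in> {0<..<1}\<close> show ?thesis by simp
qed

lemma gen_inverse_mono: "s \<le> t \<Longrightarrow> gen_inverse \<phi> s \<le> gen_inverse \<phi> t"
  by (rule gen_inverse_greatest, rule gen_inverse_le) auto

lemma gen_inverse_ge_of_le:
  assumes "x \<in> {0<..<1}" "\<phi> x \<le> t"
  shows "x \<le> gen_inverse \<phi> t"
proof (rule gen_inverse_greatest)
  fix y assume y: "y \<in> {0<..<1}" "t < \<phi> y"
  show "x \<le> y"
  proof (rule ccontr)
    assume "\<not> x \<le> y"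
    then have "\<phi> y < \<phi> x" using strict_mono_onD[OF strict_mono y(1) assms(1)] by simp
    with y(2) assms(2) show False by simp
  qed
qed

lemma gen_inverse_right_increment:
  assumes "0 < e"
  shows "\<exists>\<delta>>0. gen_inverse \<phi> (t + \<delta>) - gen_inverse \<phi> t < e"
proof -
  have "\<exists>y\<in>{x \<in> {0<..<1}. t < \<phi> x}. y < gen_inverse \<phi> t + e"
    unfolding gen_inverse_def by (rule cInf_lessD) (use unbounded[of t] assms in auto)
  then obtain y where y: "y \<in> {0<..<1}" "t < \<phi> y" "y < gen_inverse \<phi> t + e"
    by blast
  then have "gen_inverse \<phi> (t + (\<phi> y - t) / 2) \<le> y"
    by (intro gen_inverse_le) (auto simp: field_simps)
  with y show ?thesis by (intro exI[of _ "(\<phi> y - t) / 2"]) auto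
qed

lemma gen_inverse_left_increment:
  assumes "0 < e"
  shows "\<exists>\<delta>>0. gen_inverse \<phi> t - gen_inverse \<phi> (t - \<delta>) < e"
proof (cases "gen_inverse \<phi> t < e")
  case True
  then show ?thesis using gen_inverse_nonneg[of "t - 1"] by (intro exI[of _ 1]) auto
next
  case False
  \<comment> \<open>Strict monotonicity is used here: \<open>\<phi> x < \<phi> x' \<le> t\<close> leaves room \<open>t - \<phi> x > 0\<close>.\<close>
  define x where "x = gen_inverse \<phi> t - e / 2"
  define x' where "x' = gen_inverse \<phi> t - e / 4"
  have x: "x \<in> {0<..<1}" "x' \<in> {0<..<1}" "x < x'" "x' < gen_inverse \<phi> t"
    using False assms gen_inverse_le_one[of t] by (auto simp: x_def x'_def)
  have "\<phi> x' \<le> t"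
    using gen_inverse_le[of x' t \<phi>] x by (meson linorder_not_le order.strict_trans2)
  moreover have "\<phi> x < \<phi> x'"
    using x strict_mono by (simp add: strict_mono_onD)
  ultimately have "0 < t - \<phi> x" by simp
  moreover have "x \<le> gen_inverse \<phi> (t - (t - \<phi> x))"
    using x by (intro gen_inverse_ge_of_le) simp_all
  ultimately have "gen_inverse \<phi> t - gen_inverse \<phi> (t - (t - \<phi> x)) < e"
    using assms by (simp add: x_def)
  with \<open>0 < t - \<phi> x\<close> show ?thesis by blast
qed

lemma isCont_gen_inverse: "isCont (gen_inverse \<phi>) t"
  unfolding continuous_at_split
  using gen_inverse_right_increment gen_inverse_left_increment gen_inverse_mono
  by (simp add: continuous_at_right_real_increasing continuous_at_left_real_increasing)

lemma gen_inverse_tendsto_one: "(gen_inverse \<phi> \<longlongrightarrow> 1) at_top"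
proof (rule order_tendstoI)
  fix a :: real assume "a < 1"
  define x where "x = (max a 0 + 1) / 2"
  have x: "x \<in> {0<..<1}" "a < x" using \<open>a < 1\<close> by (auto simp: x_def max_def)
  have "a < gen_inverse \<phi> t" if "\<phi> x \<le> t" for t
    using gen_inverse_ge_of_le[OF x(1) that] x(2) by simp
  then show "eventually (\<lambda>t. a < gen_inverse \<phi> t) at_top"
    by (rule eventually_at_top_linorderI)
next
  fix a :: real assume "1 < a"
  then show "eventually (\<lambda>t. gen_inverse \<phi> t < a) at_top"
    using gen_inverse_le_one by (intro always_eventually) (auto intro: order.strict_trans1)
qed

end

lemma scaled_ln_one_minus_less:
  fixes x y :: real
  assumes "0 < x" "x < y" "y < 1"
  shows "x / y * ln (1 - y) < ln (1 - x)"
proof -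
  define a where "a = ln (1 - y)"
  define b where "b = x / y * a"
  have a: "a < 0" and exp_a: "exp a = 1 - y"
    using assms by (simp_all add: a_def)
  have q: "0 < x / y" "x / y < 1" using assms by simp_all
  have "a < b"
    using mult_less_cancel_right_neg[OF a, of 1 "x / y"] q by (simp add: b_def)
  have "b < 0"
    unfolding b_def using mult_pos_neg[OF q(1) a] .
  have "b * y = x * a"
    using assms by (simp add: b_def)
  then have "(0 - b) * exp a + (b - a) * exp 0 = (- a) * (1 - x)"
    unfolding exp_a by (simp add: algebra_simps)
  with exp_strictly_below_chord[OF \<open>a < b\<close> \<open>b < 0\<close>]
  have "exp b * (- a) < (- a) * (1 - x)" by simp
  then have "exp b < 1 - x"
    using a by (simp add: mult.commute[of "exp b"])
  then have "ln (exp b) < ln (1 - x)"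
    using assms by (subst ln_less_cancel_iff) auto
  then have "b < ln (1 - x)" by simp
  then show ?thesis by (simp add: b_def a_def)
qed

lemma strict_mono_on_neg_ln_ratio:
  fixes rho :: real
  assumes "0 < rho"
  shows "strict_mono_on {0<..<1} (\<lambda>x. - ln (1 - x) / (2 * rho * x))"
proof (rule strict_mono_onI)
  fix x y :: real assume xy: "x \<in> {0<..<1}" "y \<in> {0<..<1}" "x < y"
  then have "x * ln (1 - y) < y * ln (1 - x)"
    using scaled_ln_one_minus_less[of x y] by (simp add: field_simps)
  then show "- ln (1 - x) / (2 * rho * x) < - ln (1 - y) / (2 * rho * y)"
    using assms xy by (simp add: field_simps)
qed

lemma neg_ln_ratio_unbounded:
  fixes rho t :: real
  assumes "0 < rho"
  shows "\<exists>x\<in>{0<..<1}. t < - ln (1 - x) / (2 * rho * x)"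
proof
  define K where "K = 2 * rho * \<bar>t\<bar> + 1"
  define x where "x = 1 - exp (- K)"
  have K: "0 < K"
    unfolding K_def by (intro add_nonneg_pos mult_nonneg_nonneg) (use assms in auto)
  then show x: "x \<in> {0<..<1}" by (simp add: x_def)
  have "t * (2 * rho * x) \<le> \<bar>t\<bar> * (2 * rho * x)"
    using assms x by (intro mult_right_mono) auto
  also have "\<dots> \<le> \<bar>t\<bar> * (2 * rho)"
    using assms x by (intro mult_left_mono mult_left_le) auto
  also have "\<dots> < - ln (1 - x)" by (simp add: x_def K_def)
  finally show "t < - ln (1 - x) / (2 * rho * x)"
    by (subst pos_less_divide_eq) (use assms x in auto)
qed

lemma g2_eq_gen_inverse: "g2 rho = gen_inverse (\<lambda>x. - ln (1 - x) / (2 * rho * x))"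
  by (simp add: fun_eq_iff g2_def gen_inverse_def)

lemma isCont_g2: "0 < rho \<Longrightarrow> isCont (g2 rho) t"
  unfolding g2_eq_gen_inverse
  by (intro isCont_gen_inverse strict_mono_on_neg_ln_ratio neg_ln_ratio_unbounded)

lemma g2_tendsto_one: "0 < rho \<Longrightarrow> (g2 rho \<longlongrightarrow> 1) at_top"
  unfolding g2_eq_gen_inverse
  by (intro gen_inverse_tendsto_one strict_mono_on_neg_ln_ratio neg_ln_ratio_unbounded)

lemma g2_nonpos:
  assumes "0 < rho" "t \<le> 0"
  shows "g2 rho t = 0"
proof -
  have "0 < - ln (1 - x) / (2 * rho * x)" if "x \<in> {0<..<1}" for x
    using that assms(1) by (intro divide_pos_pos) auto
  with assms(2) show ?thesis
    unfolding g2_eq_gen_inverse by (intro gen_inverse_eq_0) (auto intro: order_le_less_trans)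
qed

lemma poisson_extinction_limit:
  fixes lam L :: real
  assumes lam: "0 < lam" and lim: "(\<lambda>n. (pgf (poisson_pmf lam) ^^ n) 0) \<longlonglongrightarrow> L"
  shows "L \<le> 1"
    and "\<And>s. 0 \<le> s \<Longrightarrow> s < 1 \<Longrightarrow> s < L \<longleftrightarrow> s < exp (lam * (s - 1))"
proof -
  define f where "f = pgf (poisson_pmf lam)"
  have f: "f s = exp (lam * (s - 1))" if "s \<in> {0..1}" for s
    using that lam by (simp add: f_def pgf_poisson)
  have mono: "mono_on {0..1} f"
    using lam by (intro mono_onI) (simp add: f)
  have maps: "f ` {0..1} \<subseteq> {0..1}"
    by (auto simp: f_def pgf_nonneg pgf_le_one)
  have cont: "continuous_on {0..1} f"
    by (subst continuous_on_cong[OF refl f]) (auto intro!: continuous_intros)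
  from limit_of_iterates_least_fixpoint[OF zero_le_one mono maps cont lim[folded f_def]]
  have L: "0 \<le> L" "L \<le> 1" "f L = L"
    and least: "\<And>s. 0 \<le> s \<Longrightarrow> s \<le> 1 \<Longrightarrow> f s \<le> s \<Longrightarrow> L \<le> s"
    by auto
  have fixpoint: "exp (lam * (L - 1)) = L"
    using L f by simp
  show "L \<le> 1" by (fact L)
  show "s < L \<longleftrightarrow> s < exp (lam * (s - 1))" if s: "0 \<le> s" "s < 1" for s
  proof
    assume "s < L"
    then have "\<not> f s \<le> s"
      using least s by fastforce
    then show "s < exp (lam * (s - 1))"
      using f s by simp
  next
    assume above: "s < exp (lam * (s - 1))"
    show "s < L"
    proof (rule ccontr)
      assume "\<not> s < L"
      then consider "L = s" | "L < s" by linarith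
      then show False
      proof cases
        case 1
        then show False using above fixpoint by simp
      next
        case 2
        then show False using above poisson_pgf_below_diagonal[OF lam fixpoint 2] s by simp
      qed
    qed
  qed
qed

lemma g2_eq_one_minus_extinction_limit:
  fixes rho t :: real
  assumes rho: "0 < rho" and t: "0 < t"
    and lim: "(\<lambda>n. (pgf (poisson_pmf (2 * rho * t)) ^^ n) 0) \<longlonglongrightarrow> L"
  shows "g2 rho t = 1 - L"
proof -
  let ?lam = "2 * rho * t"
  have lam: "0 < ?lam" using rho t by simp
  note extinction = poisson_extinction_limit[OF lam lim]
  have "0 < L"
    using extinction(2)[of 0] by simp
  have "t < - ln (1 - x) / (2 * rho * x) \<longleftrightarrow> 1 - x < L" if x: "x \<in> {0<..<1}" for x
  proof -
    have "t < - ln (1 - x) / (2 * rho * x) \<longleftrightarrow> ln (1 - x) < ?lam * ((1 - x) - 1)"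
      using x rho by (subst pos_less_divide_eq) (auto simp: algebra_simps)
    also have "\<dots> \<longleftrightarrow> 1 - x < exp (?lam * ((1 - x) - 1))"
      using x by (subst ln_less_cancel_iff[symmetric]) auto
    also have "\<dots> \<longleftrightarrow> 1 - x < L"
      using extinction(2)[of "1 - x"] x by simp
    finally show ?thesis .
  qed
  then have "{x \<in> {0<..<1}. t < - ln (1 - x) / (2 * rho * x)} = {1 - L<..<1}"
    using extinction(1) by auto
  then show ?thesis
    using \<open>0 < L\<close> by (simp add: g2_def)
qed

section \<open>Entry times of increasing families of events\<close>

definition entry_time :: "(real \<Rightarrow> 'a \<Rightarrow> bool) \<Rightarrow> 'a \<Rightarrow> ereal" where
  "entry_time S \<omega> = Inf {ereal t | t. 0 \<le> t \<and> S t \<omega>}"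

lemma entry_time_nonneg: "0 \<le> entry_time S \<omega>"
  unfolding entry_time_def by (rule Inf_greatest) auto

lemma entry_time_le: "0 \<le> t \<Longrightarrow> S t \<omega> \<Longrightarrow> entry_time S \<omega> \<le> ereal t"
  unfolding entry_time_def by (rule Inf_lower) auto

lemma entry_time_le_iff:
  assumes mono: "\<And>s t. 0 \<le> s \<Longrightarrow> s \<le> t \<Longrightarrow> S s \<omega> \<Longrightarrow> S t \<omega>" and "0 \<le> a"
  shows "entry_time S \<omega> \<le> ereal a \<longleftrightarrow> (\<forall>k. S (a + inverse (Suc k)) \<omega>)"
proof
  assume le: "entry_time S \<omega> \<le> ereal a"
  show "\<forall>k. S (a + inverse (Suc k)) \<omega>"
  proof
    fix k
    have "entry_time S \<omega> < ereal (a + inverse (Suc k))"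
      using le by (rule le_less_trans) simp
    then obtain t where "0 \<le> t" "S t \<omega>" "t < a + inverse (Suc k)"
      unfolding entry_time_def Inf_less_iff by auto
    then show "S (a + inverse (Suc k)) \<omega>"
      using mono[of t "a + inverse (Suc k)"] by simp
  qed
next
  assume "\<forall>k. S (a + inverse (Suc k)) \<omega>"
  then have "entry_time S \<omega> \<le> ereal (a + inverse (Suc k))" for k
    using \<open>0 \<le> a\<close> by (intro entry_time_le) auto
  moreover have "(\<lambda>k. a + inverse (Suc k)) \<longlonglongrightarrow> a"
    using tendsto_add[OF tendsto_const LIMSEQ_inverse_real_of_nat, of a] by simp
  then have "(\<lambda>k. ereal (a + inverse (Suc k))) \<longlonglongrightarrow> ereal a"
    by (rule tendsto_ereal)
  ultimately show "entry_time S \<omega> \<le> ereal a"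
    using LIMSEQ_le_const by blast
qed

context prob_space
begin

context
  fixes S :: "real \<Rightarrow> 'a \<Rightarrow> bool"
  assumes measurable_S[measurable]: "\<And>t. Measurable.pred M (S t)"
    and mono_S: "\<And>\<omega> s t. \<omega> \<in> space M \<Longrightarrow> 0 \<le> s \<Longrightarrow> s \<le> t \<Longrightarrow> S s \<omega> \<Longrightarrow> S t \<omega>"
begin

lemma entry_time_le_set:
  "{\<omega> \<in> space M. entry_time S \<omega> \<le> ereal a} =
    (if 0 \<le> a then (\<Inter>k. {\<omega> \<in> space M. S (a + inverse (Suc k)) \<omega>}) else {})"
proof (cases "0 \<le> a")
  case True
  have "entry_time S \<omega> \<le> ereal a \<longleftrightarrow> (\<forall>k. S (a + inverse (Suc k)) \<omega>)" if "\<omega> \<in> space M" for \<omega>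
    using entry_time_le_iff[where S = S, OF mono_S[OF that] True] .
  with True show ?thesis by auto
next
  case False
  have "\<not> entry_time S \<omega> \<le> ereal a" for \<omega>
  proof
    assume "entry_time S \<omega> \<le> ereal a"
    with entry_time_nonneg[of S \<omega>] have "0 \<le> ereal a" by (rule order.trans)
    with False show False by simp
  qed
  with False show ?thesis by auto
qed

lemma borel_measurable_entry_time[measurable]: "entry_time S \<in> borel_measurable M"
proof (rule borel_measurableI_le)
  fix y :: ereal
  show "{\<omega> \<in> space M. entry_time S \<omega> \<le> y} \<in> sets M"
  proof (cases y)
    case (real a)
    then show ?thesis by (simp add: entry_time_le_set)
  next
    case MInf
    then show ?thesis using entry_time_nonneg[of S] by (simp add: order.antisym)
  qed simp
qed

lemma prob_entry_time_le:
  assumes prob_S: "\<And>t. 0 \<le> t \<Longrightarrow> prob {\<omega> \<in> space M. S t \<omega>} = G t"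
    and cont: "continuous_on {0..} G" and "0 \<le> a"
  shows "prob {\<omega> \<in> space M. entry_time S \<omega> \<le> ereal a} = G a"
proof -
  define A where "A k = {\<omega> \<in> space M. S (a + inverse (Suc k)) \<omega>}" for k
  have "decseq A"
  proof (rule decseq_SucI)
    fix k
    have "inverse (real (Suc (Suc k))) \<le> inverse (real (Suc k))"
      by (rule le_imp_inverse_le) auto
    then show "A (Suc k) \<subseteq> A k"
      using mono_S[of _ "a + inverse (Suc (Suc k))" "a + inverse (Suc k)"] \<open>0 \<le> a\<close>
      by (auto simp: A_def)
  qed
  moreover have "range A \<subseteq> sets M"
    by (auto simp: A_def)
  ultimately have "(\<lambda>k. prob (A k)) \<longlonglongrightarrow> prob (\<Inter>k. A k)"
    by (intro finite_Lim_measure_decseq)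
  moreover have "(\<lambda>k. prob (A k)) \<longlonglongrightarrow> G a"
  proof -
    have "(\<lambda>k. a + inverse (Suc k)) \<longlonglongrightarrow> a"
      using tendsto_add[OF tendsto_const LIMSEQ_inverse_real_of_nat, of a] by simp
    then have "(\<lambda>k. G (a + inverse (Suc k))) \<longlonglongrightarrow> G a"
      using \<open>0 \<le> a\<close> by (intro continuous_on_tendsto_compose[OF cont]) auto
    moreover have "prob (A k) = G (a + inverse (Suc k))" for k
      using \<open>0 \<le> a\<close> by (simp add: A_def prob_S)
    ultimately show ?thesis by simp
  qed
  ultimately show ?thesis
    using \<open>0 \<le> a\<close> by (simp add: entry_time_le_set A_def LIMSEQ_unique)
qed

lemma prob_entry_time_infinite:
  assumes prob_S: "\<And>t. 0 \<le> t \<Longrightarrow> prob {\<omega> \<in> space M. S t \<omega>} = G t"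
    and lim: "(G \<longlongrightarrow> 1) at_top"
  shows "prob {\<omega> \<in> space M. entry_time S \<omega> = \<infinity>} = 0"
proof -
  let ?I = "{\<omega> \<in> space M. entry_time S \<omega> = \<infinity>}"
  have "prob ?I \<le> 1 - G t" if "0 \<le> t" for t
  proof -
    have "?I \<subseteq> space M - {\<omega> \<in> space M. S t \<omega>}"
      using that by (force dest: entry_time_le[OF that])
    then have "prob ?I \<le> prob (space M - {\<omega> \<in> space M. S t \<omega>})"
      by (intro finite_measure_mono) auto
    also have "\<dots> = 1 - G t"
      using that by (simp add: prob_compl prob_S)
    finally show ?thesis .
  qed
  moreover have "((\<lambda>t. 1 - G t) \<longlongrightarrow> 0) at_top"
    using tendsto_diff[OF tendsto_const lim, of 1] by simp
  ultimately have "prob ?I \<le> 0"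
    by (intro tendsto_lowerbound[of "\<lambda>t. 1 - G t" 0 at_top])
      (auto intro: eventually_at_top_linorderI)
  then show ?thesis
    using measure_nonneg[of M ?I] by linarith
qed

lemma AE_entry_time_finite:
  assumes prob_S: "\<And>t. 0 \<le> t \<Longrightarrow> prob {\<omega> \<in> space M. S t \<omega>} = G t"
    and lim: "(G \<longlongrightarrow> 1) at_top"
  shows "AE \<omega> in M. entry_time S \<omega> \<noteq> \<infinity>"
proof (rule AE_I')
  show "{\<omega> \<in> space M. entry_time S \<omega> = \<infinity>} \<in> null_sets M"
    using prob_entry_time_infinite[OF prob_S lim] by (simp add: null_sets_def emeasure_eq_measure)
qed auto

lemma prob_entry_time_eq_le_diff:
  assumes prob_S: "\<And>t. 0 \<le> t \<Longrightarrow> prob {\<omega> \<in> space M. S t \<omega>} = G t"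
    and cont: "continuous_on {0..} G" and s: "0 \<le> s" "s < r"
  shows "prob {\<omega> \<in> space M. entry_time S \<omega> = ereal r} \<le> G r - G s"
proof -
  let ?le = "\<lambda>a. {\<omega> \<in> space M. entry_time S \<omega> \<le> ereal a}"
  have sets: "?le a \<in> sets M" for a
    by measurable
  have "prob {\<omega> \<in> space M. entry_time S \<omega> = ereal r} \<le> prob (?le r - ?le s)"
    using s sets by (intro finite_measure_mono) auto
  also have "\<dots> = G r - G s"
    using s sets by (subst finite_measure_Diff)
      (auto intro: order.trans simp: prob_entry_time_le[OF prob_S cont])
  finally show ?thesis .
qed

lemma prob_entry_time_eq_pos:
  assumes prob_S: "\<And>t. 0 \<le> t \<Longrightarrow> prob {\<omega> \<in> space M. S t \<omega>} = G t"
    and cont: "continuous_on {0..} G" and "0 < r"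
  shows "prob {\<omega> \<in> space M. entry_time S \<omega> = ereal r} = 0"
proof -
  let ?E = "{\<omega> \<in> space M. entry_time S \<omega> = ereal r}"
  define s where "s k = r - r * inverse (Suc k)" for k
  have s: "0 \<le> s k" "s k < r" for k
    using \<open>0 < r\<close> by (auto simp: s_def field_simps)
  have "s \<longlonglongrightarrow> r - r * 0"
    unfolding s_def by (intro tendsto_intros LIMSEQ_inverse_real_of_nat)
  then have "(\<lambda>k. G (s k)) \<longlonglongrightarrow> G r"
    using s \<open>0 < r\<close> by (intro continuous_on_tendsto_compose[OF cont]) auto
  then have "(\<lambda>k. G r - G (s k)) \<longlonglongrightarrow> G r - G r"
    by (intro tendsto_diff tendsto_const)
  then have "prob ?E \<le> G r - G r"
    using prob_entry_time_eq_le_diff[OF prob_S cont s] by (intro tendsto_lowerbound) auto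
  then show ?thesis
    using measure_nonneg[of M ?E] by simp
qed

lemma prob_entry_time_eq:
  assumes prob_S: "\<And>t. 0 \<le> t \<Longrightarrow> prob {\<omega> \<in> space M. S t \<omega>} = G t"
    and cont: "continuous_on {0..} G" and "G 0 = 0" and lim: "(G \<longlongrightarrow> 1) at_top"
  shows "prob {\<omega> \<in> space M. entry_time S \<omega> = x} = 0"
proof -
  consider "x = \<infinity>" | "x < 0" | "x = 0" | r where "0 < r" "x = ereal r"
  proof (cases x)
    case (real r)
    with that show ?thesis by (cases r "0 :: real" rule: linorder_cases) auto
  qed (use that in auto)
  then show ?thesis
  proof cases
    case 1
    then show ?thesis using prob_entry_time_infinite[OF prob_S lim] by simp
  next
    case 2
    then have "{\<omega> \<in> space M. entry_time S \<omega> = x} = {}"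
      using entry_time_nonneg[of S] by (auto simp: not_le[symmetric])
    then show ?thesis by (simp only: measure_empty)
  next
    case 3
    have "prob {\<omega> \<in> space M. entry_time S \<omega> = x} \<le> prob {\<omega> \<in> space M. entry_time S \<omega> \<le> ereal 0}"
      using 3 by (intro finite_measure_mono) (auto simp: zero_ereal_def)
    also have "\<dots> = 0"
      using \<open>G 0 = 0\<close> prob_entry_time_le[OF prob_S cont, of 0] by simp
    finally show ?thesis
      using measure_nonneg[of M] order.antisym by blast
  next
    case 4
    then show ?thesis using prob_entry_time_eq_pos[OF prob_S cont] by simp
  qed
qed

end

end

section \<open>Independent Poisson processes\<close>

lemma (in prob_space) distr_to_stream_iid:
  fixes X :: "nat \<Rightarrow> 'a \<Rightarrow> 'b"
  assumes indep: "indep_vars (\<lambda>_. count_space UNIV) X UNIV"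
    and law: "\<And>i. distr M (count_space UNIV) (X i) = measure_pmf q"
    and "inj f"
  shows "distr M (stream_space (measure_pmf q)) (\<lambda>\<omega>. to_stream (\<lambda>i. X (f i) \<omega>))
    = stream_space (measure_pmf q)"
proof -
  let ?Q = "measure_pmf q"
  let ?\<Pi> = "\<Pi>\<^sub>M i\<in>UNIV. ?Q"
  have X_meas: "X i \<in> measurable M ?Q" for i
    using indep
    by (simp add: indep_vars_def measurable_cong_sets[OF refl sets_measure_pmf_count_space])
  have "distr M (\<Pi>\<^sub>M i\<in>UNIV. count_space UNIV) (\<lambda>\<omega>. \<lambda>i\<in>UNIV. X i \<omega>)
      = (\<Pi>\<^sub>M i\<in>UNIV. distr M (count_space UNIV) (X i))"
    using indep by (subst indep_vars_iff_distr_eq_PiM'[symmetric]) (auto simp: indep_vars_def)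
  then have vec: "distr M ?\<Pi> (\<lambda>\<omega> i. X i \<omega>) = ?\<Pi>"
    by (simp add: law restrict_UNIV
        cong: distr_cong[OF refl sets_PiM_cong[OF refl sets_measure_pmf_count_space]])
  have reindex: "distr ?\<Pi> ?\<Pi> (\<lambda>\<omega>. \<lambda>i\<in>UNIV. \<omega> (f i)) = ?\<Pi>"
    using distr_PiM_reindex[of UNIV "\<lambda>_. ?Q" f UNIV] \<open>inj f\<close> by (simp add: prob_space_measure_pmf)
  have "distr M (stream_space ?Q) (\<lambda>\<omega>. to_stream (\<lambda>i. X (f i) \<omega>))
      = distr (distr (distr M ?\<Pi> (\<lambda>\<omega> i. X i \<omega>)) ?\<Pi> (\<lambda>\<omega>. \<lambda>i\<in>UNIV. \<omega> (f i)))
          (stream_space ?Q) to_stream"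
    using X_meas by (simp add: distr_distr measurable_PiM_single' comp_def restrict_UNIV)
  also have "\<dots> = stream_space ?Q"
    by (simp add: vec reindex stream_space_eq_distr[symmetric])
  finally show ?thesis .
qed

locale poisson_family = prob_space M for M :: "'a measure" +
  fixes rho :: real and P :: "nat \<Rightarrow> real \<Rightarrow> 'a \<Rightarrow> nat"
  assumes rho_pos: "0 < rho"
    and poisson: "\<And>n. poisson_process M (2 * rho) (P n)"
    and indep: "indep_vars (\<lambda>_. \<Pi>\<^sub>M t\<in>UNIV. count_space UNIV) (\<lambda>n \<omega>. \<lambda>t. P n t \<omega>) UNIV"
begin

abbreviation survives :: "real \<Rightarrow> 'a \<Rightarrow> bool" where
  "survives t \<omega> \<equiv> hitM (\<lambda>n. P n t \<omega>) = \<infinity>"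

lemma measurable_P[measurable]: "P n t \<in> measurable M (count_space UNIV)"
  using poisson[of n] by (simp add: poisson_process_def)

lemma P_zero: "\<omega> \<in> space M \<Longrightarrow> P n 0 \<omega> = 0"
  using poisson[of n] by (simp add: poisson_process_def)

lemma P_mono: "\<omega> \<in> space M \<Longrightarrow> 0 \<le> s \<Longrightarrow> s \<le> t \<Longrightarrow> P n s \<omega> \<le> P n t \<omega>"
  using poisson[of n] unfolding poisson_process_def mono_on_def by auto

lemma distr_P:
  assumes "0 < t"
  shows "distr M (count_space UNIV) (P n t) = measure_pmf (poisson_pmf (2 * rho * t))"
proof -
  have "distr M (count_space UNIV) (P n t) = distr M (count_space UNIV) (\<lambda>\<omega>. P n t \<omega> - P n 0 \<omega>)"
    by (intro distr_cong) (auto simp: P_zero)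
  also have "\<dots> = measure_pmf (poisson_pmf (2 * rho * t))"
    using poisson[of n] assms unfolding poisson_process_def by force
  finally show ?thesis .
qed

lemma indep_P: "indep_vars (\<lambda>_. count_space UNIV) (\<lambda>n. P n t) UNIV"
  using indep_vars_compose2[OF indep, of "\<lambda>_ f. f t" "\<lambda>_. count_space UNIV"] by simp

lemma distr_offspring_stream:
  assumes "0 < t"
  shows "distr M (stream_space (measure_pmf (poisson_pmf (2 * rho * t))))
      (\<lambda>\<omega>. to_stream (\<lambda>j. P (Suc j) t \<omega>)) = stream_space (measure_pmf (poisson_pmf (2 * rho * t)))"
  using distr_to_stream_iid[OF indep_P distr_P[OF assms]] by simp

lemma measurable_offspring_stream[measurable]:
  "(\<lambda>\<omega>. to_stream (\<lambda>j. P (Suc j) t \<omega>)) \<in> measurable M (stream_space (count_space UNIV))"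
  by (rule measurable_compose[OF measurable_PiM_single' measurable_to_stream]) auto

lemma measurable_survives[measurable]: "Measurable.pred M (survives t)"
  unfolding hitM_eq_infinity_iff_not_extinct by measurable

lemma survives_mono: "\<omega> \<in> space M \<Longrightarrow> 0 \<le> s \<Longrightarrow> s \<le> t \<Longrightarrow> survives s \<omega> \<Longrightarrow> survives t \<omega>"
  by (rule hitM_eq_infinity_mono[of "\<lambda>n. P n s \<omega>"]) (auto intro: P_mono)

lemma prob_survives_pos:
  assumes "0 < t"
  shows "prob {\<omega> \<in> space M. survives t \<omega>} = g2 rho t"
proof -
  let ?S = "stream_space (measure_pmf (poisson_pmf (2 * rho * t)))"
  let ?E = "{X \<in> space ?S. \<exists>n. extinct_within n 1 X}"
  let ?\<Phi> = "\<lambda>\<omega>. to_stream (\<lambda>j. P (Suc j) t \<omega>)"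
  interpret S: prob_space ?S
    by (rule prob_space.prob_space_stream_space[OF prob_space_measure_pmf])
  have \<Phi>: "?\<Phi> \<in> measurable M ?S"
    by (simp add:
        measurable_cong_sets[OF refl sets_stream_space_cong[OF sets_measure_pmf_count_space]])
  have E: "?E \<in> S.events"
    by measurable
  have "{\<omega> \<in> space M. survives t \<omega>} = ?\<Phi> -` (space ?S - ?E) \<inter> space M"
    by (auto simp: hitM_eq_infinity_iff_not_extinct space_stream_space)
  then have "prob {\<omega> \<in> space M. survives t \<omega>} = measure (distr M ?S ?\<Phi>) (space ?S - ?E)"
    using E by (simp add: measure_distr[OF \<Phi>])
  also have "\<dots> = 1 - S.prob ?E"
    using E by (simp add: distr_offspring_stream[OF assms] S.prob_compl)
  also have "\<dots> = g2 rho t"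
    using g2_eq_one_minus_extinction_limit[OF rho_pos assms
        pgf_iterates_tendsto_extinction_probability]
    by simp
  finally show ?thesis .
qed

lemma prob_survives: "0 \<le> t \<Longrightarrow> prob {\<omega> \<in> space M. survives t \<omega>} = g2 rho t"
proof (cases "t = 0")
  case True
  have "xi (\<lambda>n. P n 0 \<omega>) 1 = 0" if "\<omega> \<in> space M" for \<omega>
    using that by (simp add: P_zero)
  then have "{\<omega> \<in> space M. survives 0 \<omega>} = {}"
    using hitM_eq_infinity_iff by blast
  then have "prob {\<omega> \<in> space M. survives 0 \<omega>} = 0"
    by (simp only: measure_empty)
  with True show ?thesis
    using g2_nonpos[OF rho_pos, of 0] by simp
qed (use prob_survives_pos in simp)

end

theorem lemma7p1:
  fixes M :: "'a measure" and rho :: real and P :: "nat \<Rightarrow> real \<Rightarrow> 'a \<Rightarrow> nat"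
    and chi :: "'a \<Rightarrow> ereal"
  assumes "prob_space M"
    and "rho > 0"
    and "\<And>n. poisson_process M (2 * rho) (P n)"
    and "prob_space.indep_vars M (\<lambda>_. Pi\<^sub>M UNIV (\<lambda>_. count_space UNIV))
           (\<lambda>n \<omega>. (\<lambda>t. P n t \<omega>)) UNIV"
    and "\<And>\<omega>. chi \<omega> = Inf {ereal t | t. t \<ge> 0 \<and> hitM (\<lambda>n. P n t \<omega>) = \<infinity>}"
  shows "(\<forall>t\<ge>0. measure M {\<omega> \<in> space M. hitM (\<lambda>n. P n t \<omega>) = \<infinity>} = g2 rho t)
    \<and> chi \<in> borel_measurable M
    \<and> (AE \<omega> in M. chi \<omega> \<noteq> \<infinity>)
    \<and> (\<forall>t\<ge>0. measure M {\<omega> \<in> space M. chi \<omega> \<le> ereal t} = g2 rho t)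
    \<and> continuous_on {0..} (g2 rho)
    \<and> (\<forall>x. measure M {\<omega> \<in> space M. chi \<omega> = x} = 0)"
proof -
  interpret poisson_family M rho P
    using assms(1-4) by (intro poisson_family.intro poisson_family_axioms.intro) auto
  have chi: "chi = entry_time survives"
    using assms(5) by (simp add: fun_eq_iff entry_time_def)
  have cont: "continuous_on {0..} (g2 rho)"
    using isCont_g2[OF rho_pos] by (simp add: continuous_at_imp_continuous_on)
  note entry_time_assms = measurable_survives survives_mono
  have "chi \<in> borel_measurable M"
    unfolding chi by (rule borel_measurable_entry_time[where S = survives, OF entry_time_assms])
  moreover have "AE \<omega> in M. chi \<omega> \<noteq> \<infinity>"
    unfolding chi
    by (rule AE_entry_time_finite[where S = survives,
          OF entry_time_assms prob_survives g2_tendsto_one[OF rho_pos]])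
  moreover have "prob {\<omega> \<in> space M. chi \<omega> \<le> ereal t} = g2 rho t" if "0 \<le> t" for t
    unfolding chi
    by (rule prob_entry_time_le[where S = survives, OF entry_time_assms prob_survives cont that])
  moreover have "prob {\<omega> \<in> space M. chi \<omega> = x} = 0" for x
    unfolding chi
    by (rule prob_entry_time_eq[where S = survives, OF entry_time_assms prob_survives cont
          g2_nonpos[OF rho_pos order.refl] g2_tendsto_one[OF rho_pos]])
  ultimately show ?thesis
    using prob_survives cont by blast
qed

end
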